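(* Let $\mu\in\mathbb{C}$ with $\mu\neq-1,-2,-3,\ldots$ and $\ell\in\mathbb{N}_0$. Then for every $j\in\mathbb{N}_0$ $$M_j^{\mu,\ell}(x)=\frac{\Gamma(j+\mu+1)}{\Gamma(j+\frac{\mu+1}{2})}\sum_{k=0}^{j}\sum_{i=0}^{\ell-k}(-1)^k\frac{\Gamma(j-k+\frac{\mu+1}{2})\,(2\ell-i)!}{k!\,\Gamma(j-k+\mu+1)\,(\ell-i-k)!\,i!}L_{j-k}^\mu(x)\,x^i=\sum_{k=0}^{j+\ell}\beta_{j,k}^{\mu,\ell}x^k,$$ where $$\beta_{j,k}^{\mu,\ell}=\frac{\Gamma(j+\mu+1)}{\Gamma(j+\frac{\mu+1}{2})}\sum_{(m,n)\in S_{j,k}^{\mu,\ell}}(-1)^{m+n}\frac{\Gamma(j-m+\frac{\mu+1}{2})}{\Gamma(n+\mu+1)}\cdot\frac{(2\ell+n-k)!}{m!\,n!\,(k-n)!\,(j-m-n)!\,(\ell+n-k-m)!}$$ and $S_{j,k}^{\mu,\ell}=\{(m,n)\in\mathbb{N}_0^2:\ 0\leq n\leq j-m,\ 0\leq k-n\leq\ell-m\}$.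
   Context: $L_n^\alpha$ denotes the Laguerre polynomial $L_n^\alpha(x)=\sum_{k=0}^n\frac{(-1)^k}{k!}\binom{n+\alpha}{n-k}x^k$ (inner sums over empty ranges are zero). Let $I_\alpha$, $K_\alpha$ be the modified Bessel functions and set $\widetilde I_\alpha(z)=(z/2)^{-\alpha}I_\alpha(z)$, $\widetilde K_\alpha(z)=(z/2)^{-\alpha}K_\alpha(z)$. For $\mu\in\mathbb{C}$, $\ell\in\mathbb{N}_0$, $x>0$ and $t$ near $0$ define $$G^{\mu,\ell}(t,x)=\frac{1}{(1-t)^{\ell+\frac{\mu+3}{2}}}\left(\frac x2\right)^{2\ell+1}e^{\frac x2}\,\widetilde I_{\frac\mu2}\!\left(\frac{tx}{2(1-t)}\right)\widetilde K_{\ell+\frac12}\!\left(\frac{x}{2(1-t)}\right),$$ and $M_j^{\mu,\ell}(x)=\frac{\Gamma(j+\mu+1)}{j!\,2^\mu\,\Gamma(j+\frac{\mu+1}{2})}\left.\frac{\partial^j}{\partial t^j}\right|_{t=0}G^{\mu,\ell}(t,x)$. *)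

theory Defs
  imports "HOL-Analysis.Analysis"
begin

definition laguerre :: "nat \<Rightarrow> complex \<Rightarrow> complex \<Rightarrow> complex" where
  "laguerre n \<alpha> z = (\<Sum>k\<le>n. (-1)^k / fact k * ((of_nat n + \<alpha>) gchoose (n - k)) * z^k)"

definition besselI :: "complex \<Rightarrow> complex \<Rightarrow> complex" where
  "besselI \<nu> z = (z/2) powr \<nu> * (\<Sum>m. (z/2)^(2*m) * rGamma (of_nat m + \<nu> + 1) / fact m)"

text \<open>Modified Bessel function of the second kind, for non-integer order nu
  (DLMF 10.27.4); it is only used at half-integer orders below.\<close>
definition besselK :: "complex \<Rightarrow> complex \<Rightarrow> complex" where
  "besselK \<nu> z = complex_of_real pi / 2 * (besselI (-\<nu>) z - besselI \<nu> z) / sin (\<nu> * complex_of_real pi)"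

text \<open>Normalized Bessel functions (z/2)^(-nu) I_nu(z) (entire in z, given by its
  power series, so that its value at z = 0 is the removable-singularity value) and
  (z/2)^(-nu) K_nu(z).\<close>
definition tildeI :: "complex \<Rightarrow> complex \<Rightarrow> complex" where
  "tildeI \<nu> z = (\<Sum>m. (z/2)^(2*m) * rGamma (of_nat m + \<nu> + 1) / fact m)"

definition tildeK :: "complex \<Rightarrow> complex \<Rightarrow> complex" where
  "tildeK \<nu> z = (z/2) powr (-\<nu>) * besselK \<nu> z"

definition G :: "complex \<Rightarrow> nat \<Rightarrow> complex \<Rightarrow> complex \<Rightarrow> complex" where
  "G \<mu> l t x = 1 / (1 - t) powr (of_nat l + (\<mu> + 3) / 2) * (x/2)^(2*l+1) * exp (x/2)
      * tildeI (\<mu>/2) (t * x / (2 * (1 - t))) * tildeK (of_nat l + 1/2) (x / (2 * (1 - t)))"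

definition M :: "complex \<Rightarrow> nat \<Rightarrow> nat \<Rightarrow> real \<Rightarrow> complex" where
  "M \<mu> l j x = Gamma (of_nat j + \<mu> + 1) / (fact j * 2 powr \<mu> * Gamma (of_nat j + (\<mu> + 1) / 2))
      * (deriv ^^ j) (\<lambda>t. G \<mu> l t (complex_of_real x)) 0"

definition Sidx :: "nat \<Rightarrow> nat \<Rightarrow> nat \<Rightarrow> (nat \<times> nat) set" where
  "Sidx l j k = {(m, n). n + m \<le> j \<and> n \<le> k \<and> k - n + m \<le> l}"

definition beta :: "complex \<Rightarrow> nat \<Rightarrow> nat \<Rightarrow> nat \<Rightarrow> complex" where
  "beta \<mu> l j k = Gamma (of_nat j + \<mu> + 1) / Gamma (of_nat j + (\<mu> + 1) / 2) *
     (\<Sum>(m, n)\<in>Sidx l j k. (-1)^(m+n) * Gamma (of_nat (j - m) + (\<mu> + 1) / 2) / Gamma (of_nat n + \<mu> + 1)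
        * fact (2*l + n - k) / (fact m * fact n * fact (k - n) * fact (j - m - n) * fact (l + n - k - m)))"

end

theory Submission
  imports Defs "HOL-Complex_Analysis.Laurent_Convergence"
begin

(* For half-integer order the Bessel function K is elementary:
   tildeK (l + 1/2) z = 2^l sqrt(pi) e^(-z) z^(-l-1) y_l(1/z), where y_l is the reverse Bessel
   polynomial; this follows from the three-term recurrence of I_nu, starting from I_(-1/2) and
   I_(1/2), which are elementary (cosh and sinh). At z = x/(2(1-t)) all powers of x and 1-t
   collapse, and G(t,x) becomes sqrt(pi) times a polynomial in 1-t times
   (1-t)^(-(mu+1)/2) e^(-y) tildeI_(mu/2)(y), with y = t x/(2(1-t)).
   The second-order differential equation of e^(-z) tildeI_nu(z) gives its Taylor coefficients
   in closed form; composing with t/(1-t) produces Laguerre polynomials, and Legendre's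
   duplication formula turns the coefficients into Gamma(m+(mu+1)/2)/Gamma(m+mu+1) L_m^mu(x).
   The j-th Taylor coefficient of G is then a finite convolution, which is the first formula;
   expanding the Laguerre polynomials and collecting powers of x gives the second. *)

unbundle no vec_syntax
unbundle fps_syntax

lemma of_nat_plus_one_neq_zero [simp]:
  "(of_nat n + 1 :: 'a :: semiring_char_0) \<noteq> 0" "(1 + of_nat n :: 'a) \<noteq> 0"
  using of_nat_eq_0_iff[of "Suc n", where 'a = 'a] by (simp_all add: add.commute)

lemma of_nat_plus_notin_nonpos_Ints:
  assumes "(z :: 'a :: ring_char_0) \<notin> \<int>\<^sub>\<le>\<^sub>0"
  shows "of_nat k + z \<notin> \<int>\<^sub>\<le>\<^sub>0"
proof
  assume "of_nat k + z \<in> \<int>\<^sub>\<le>\<^sub>0"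
  then have "of_nat k + z - of_nat k \<in> \<int>\<^sub>\<le>\<^sub>0" by (rule nonpos_Ints_diff_Nats) simp
  with assms show False by simp
qed

lemma plus_one_notin_nonpos_Ints_iff:
  "(\<mu> :: 'a :: ring_char_0) + 1 \<notin> \<int>\<^sub>\<le>\<^sub>0 \<longleftrightarrow> (\<forall>n. \<mu> \<noteq> - of_nat (Suc n))"
proof
  assume "\<mu> + 1 \<notin> \<int>\<^sub>\<le>\<^sub>0"
  show "\<forall>n. \<mu> \<noteq> - of_nat (Suc n)"
  proof (intro allI notI)
    fix n assume "\<mu> = - of_nat (Suc n)"
    then have "\<mu> + 1 = - of_nat n" by simp
    with \<open>\<mu> + 1 \<notin> \<int>\<^sub>\<le>\<^sub>0\<close> show False by simp
  qed
next
  assume "\<forall>n. \<mu> \<noteq> - of_nat (Suc n)"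
  then show "\<mu> + 1 \<notin> \<int>\<^sub>\<le>\<^sub>0"
    by (auto elim!: nonpos_Ints_cases' simp: algebra_simps eq_neg_iff_add_eq_0)
qed

lemma rGamma_nat_plus1: "rGamma (of_nat m + 1 :: complex) = 1 / fact m"
  using Gamma_fact[of m] by (simp add: rGamma_inverse_Gamma inverse_eq_divide add.commute)

lemma rGamma_half_nat_mult:
  "rGamma (of_nat n / 2 + 1/2) * rGamma (of_nat n / 2 + 1) = 2^n / (of_real (sqrt pi) * fact n :: complex)"
proof (induction n)
  case 0
  have "rGamma (1/2 :: complex) = 1 / of_real (sqrt pi)"
    using Gamma_one_half_complex by (simp add: rGamma_inverse_Gamma inverse_eq_divide add.commute)
  then show ?case by simp
next
  case (Suc n)
  define h :: complex where "h = of_nat n / 2 + 1/2"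
  have "h \<noteq> 0" unfolding h_def by (simp add: add_divide_distrib[symmetric] del: of_nat_Suc)
  then have "rGamma (h + 1) = rGamma h / h"
    using rGamma_plus1[of h] by (metis nonzero_mult_div_cancel_left)
  moreover have "of_nat (Suc n) / 2 + 1/2 = of_nat n / 2 + (1::complex)"
    and "of_nat (Suc n) / 2 + 1 = h + 1"
    unfolding h_def by (simp_all add: add_divide_distrib)
  ultimately have "rGamma (of_nat (Suc n) / 2 + 1/2) * rGamma (of_nat (Suc n) / 2 + 1)
      = rGamma h * rGamma (of_nat n / 2 + 1) / h"
    by simp
  also have "\<dots> = 2^n / (of_real (sqrt pi) * fact n) / h"
    unfolding h_def Suc.IH ..
  finally show ?case unfolding h_def by (simp add: field_simps)
qed

lemma sin_half_integer_pi: "sin ((of_nat l + 1/2) * of_real pi) = ((-1)^l :: complex)"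
proof -
  have "(of_nat l + 1/2) * of_real pi = of_nat l * of_real pi + (of_real (pi/2) :: complex)"
    by (simp add: algebra_simps)
  then show ?thesis by (simp add: sin_add flip: sin_of_real cos_of_real)
qed

lemma Suc_times_binomial_add_2:
  "Suc k * (n + 2 choose (k + 2)) = Suc k * (n choose (k + 2)) + (2 * n + 1 - k) * (n choose k)"
proof (cases "k \<le> n")
  case True
  have pascal: "(n + 2 choose (k + 2)) = (n choose (k + 2)) + 2 * (n choose (k + 1)) + (n choose k)"
    by (simp add: numeral_2_eq_2)
  have absorb: "(n - k) * (n choose k) = Suc k * (n choose (k + 1))"
    using times_binomial_minus1_eq[of "Suc k" n] binomial_absorb_comp[of n k] by simp
  have "2 * n + 1 - k = 2 * (n - k) + Suc k" using True by simp
  then have "(2 * n + 1 - k) * (n choose k) = 2 * ((n - k) * (n choose k)) + Suc k * (n choose k)"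
    by (simp only: add_mult_distrib mult.assoc)
  then show ?thesis unfolding pascal absorb by (simp add: algebra_simps)
qed (simp add: binomial_eq_0)

lemma sums_even_reindex:
  assumes "\<And>n. odd n \<Longrightarrow> f n = 0"
  shows "(\<lambda>m. f (2*m)) sums s \<longleftrightarrow> f sums s"
proof (rule sums_mono_reindex)
  fix n :: nat assume "n \<notin> range (\<lambda>m. 2*m)"
  then show "f n = 0" by (metis assms evenE rangeI)
qed (simp add: strict_mono_def)

lemma sums_odd_reindex:
  assumes "\<And>n. even n \<Longrightarrow> f n = 0"
  shows "(\<lambda>m. f (2*m+1)) sums s \<longleftrightarrow> f sums s"
proof (rule sums_mono_reindex)
  fix n :: nat assume "n \<notin> range (\<lambda>m. 2*m+1)"
  then show "f n = 0" by (metis assms oddE rangeI)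
qed (simp add: strict_mono_def)

section \<open>Binomial power series\<close>

lemma one_minus_X_power_nth: "((1 - fps_X)^i :: 'a :: comm_ring_1 fps) $ k = (-1)^k * of_nat (i choose k)"
proof (induction i arbitrary: k)
  case 0
  then show ?case by (cases k) simp_all
next
  case (Suc i)
  have "((1 - fps_X)^Suc i :: 'a fps) = (1 - fps_X)^i - fps_X * (1 - fps_X)^i"
    by (simp add: algebra_simps)
  then show ?case
    using Suc.IH by (cases k) (simp_all add: fps_X_mult_nth algebra_simps)
qed

lemma sum_one_minus_X_power_mult_nth:
  fixes c :: "nat \<Rightarrow> 'a :: comm_ring_1"
  shows "((\<Sum>i\<le>l. fps_const (c i) * (1 - fps_X)^i) * P) $ j
     = (\<Sum>k\<le>j. \<Sum>i\<le>l. c i * ((-1)^k * of_nat (i choose k)) * P $ (j - k))"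
proof -
  have "((\<Sum>i\<le>l. fps_const (c i) * (1 - fps_X)^i) * P) $ j = (\<Sum>i\<le>l. c i * ((1 - fps_X)^i * P) $ j)"
    by (simp add: sum_distrib_right fps_sum_nth mult.assoc)
  also have "\<dots> = (\<Sum>i\<le>l. \<Sum>k\<le>j. c i * ((-1)^k * of_nat (i choose k)) * P $ (j - k))"
    unfolding fps_mult_nth one_minus_X_power_nth by (simp add: sum_distrib_left atLeast0AtMost mult.assoc)
  finally show ?thesis by (simp only: sum.swap[of _ "{..l}"])
qed

definition fps_neg_binomial :: "'a :: field_char_0 \<Rightarrow> 'a fps" where
  "fps_neg_binomial c = fps_binomial (-c) oo (-fps_X)"

lemma fps_neg_binomial_nth: "fps_neg_binomial c $ n = pochhammer c n / fact n"
  unfolding fps_neg_binomial_def fps_compose_uminus' by (simp add: gbinomial_pochhammer)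

lemma fps_neg_binomial_add: "fps_neg_binomial c * fps_neg_binomial d = fps_neg_binomial (c + d)"
  unfolding fps_neg_binomial_def minus_add_distrib fps_binomial_add_mult
  by (simp add: fps_compose_mult_distrib)

lemma fps_neg_binomial_0: "fps_neg_binomial 0 = 1"
  by (rule fps_ext) (simp add: fps_neg_binomial_nth pochhammer_0_left)

lemma fps_neg_binomial_1: "fps_neg_binomial 1 = inverse (1 - fps_X)"
proof -
  have "fps_neg_binomial 1 = Abs_fps (\<lambda>n. 1)"
    by (rule fps_ext) (simp add: fps_neg_binomial_nth pochhammer_fact[symmetric])
  then show ?thesis by (simp flip: fps_inverse_gp')
qed

lemma has_fps_expansion_neg_binomial:
  fixes c :: complex
  shows "(\<lambda>t. (1 - t) powr (-c)) has_fps_expansion fps_neg_binomial c"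
proof -
  have "((\<lambda>u. (1 + u) powr (-c)) \<circ> (\<lambda>t. -t)) has_fps_expansion fps_neg_binomial c"
    unfolding fps_neg_binomial_def
    by (rule has_fps_expansion_compose[OF has_fps_expansion_binomial_complex
          has_fps_expansion_minus[OF has_fps_expansion_fps_X]]) simp
  then show ?thesis by (simp add: o_def)
qed

section \<open>The normalized Bessel function of the first kind\<close>

lemma summable_rGamma_series:
  fixes w c :: complex
  shows "summable (\<lambda>m. w^m * rGamma (of_nat m + c) / fact m)"
proof (rule summable_ratio_test[of "1/2" "nat \<lceil>2 * norm w + norm c\<rceil>"])
  fix n assume "nat \<lceil>2 * norm w + norm c\<rceil> \<le> n"
  define a where "a k = w^k * rGamma (of_nat k + c) / fact k" for k
  define d where "d = norm (of_nat n + c) * (real n + 1)"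
  have "2 * norm w \<le> real n - norm c" using \<open>nat \<lceil>2 * norm w + norm c\<rceil> \<le> n\<close> by linarith
  also have "\<dots> \<le> norm (of_nat n + c)"
    using norm_triangle_ineq2[of "of_nat n" "-c"] by simp
  also have "\<dots> \<le> d" unfolding d_def by (simp add: mult_le_cancel_left1)
  finally have w_small: "2 * norm w \<le> d" .
  have "a (Suc n) * ((of_nat n + c) * of_nat (Suc n))
      = w * (w^n * ((of_nat n + c) * rGamma (of_nat n + c + 1)) / fact n)"
    unfolding a_def fact_Suc by (simp add: field_simps del: of_nat_Suc) (simp add: add_ac)
  also have "\<dots> = w * a n" by (simp only: rGamma_plus1 a_def)
  finally have "a (Suc n) * ((of_nat n + c) * of_nat (Suc n)) = w * a n" .
  then have ratio: "norm (a (Suc n)) * d = norm w * norm (a n)"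
    unfolding d_def by (metis norm_mult norm_of_nat of_nat_Suc add.commute)
  show "norm (a (Suc n)) \<le> 1/2 * norm (a n)"
  proof (cases "w = 0")
    case False
    then have "d > 0" using w_small by (smt (verit) zero_less_norm_iff)
    have "norm (a (Suc n)) * d \<le> (1/2 * norm (a n)) * d"
      unfolding ratio using mult_right_mono[OF w_small norm_ge_zero[of "a n"]] by (simp add: mult_ac)
    with \<open>d > 0\<close> show ?thesis by simp
  qed (simp add: a_def)
qed simp

lemma tildeI_sums: "(\<lambda>m. (z/2)^(2*m) * rGamma (of_nat m + \<nu> + 1) / fact m) sums tildeI \<nu> z"
proof -
  have "summable (\<lambda>m. (z/2)^(2*m) * rGamma (of_nat m + \<nu> + 1) / fact m)"
    using summable_rGamma_series[of "(z/2)^2" "\<nu> + 1"] by (simp add: power_mult add.assoc)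
  then show ?thesis unfolding tildeI_def by (rule summable_sums)
qed

lemma tildeI_recurrence: "tildeI (\<nu> - 1) z - (z/2)^2 * tildeI (\<nu> + 1) z = \<nu> * tildeI \<nu> z"
proof -
  define b where "b m = (z/2)^(2*m) * rGamma (of_nat m + \<nu> + 1) / fact m" for m
  have "of_nat (Suc m) * b (Suc m) = (z/2)^2 * ((z/2)^(2*m) * rGamma (of_nat m + (\<nu> + 1) + 1) / fact m)" for m
  proof -
    have e: "(z/2)^(2 * Suc m) = (z/2)^2 * (z/2)^(2*m)"
      "of_nat (Suc m) + \<nu> + 1 = of_nat m + (\<nu> + 1) + (1::complex)"
      "(fact (Suc m) :: complex) = of_nat (Suc m) * fact m"
      by (simp_all flip: power_add)
    show ?thesis unfolding b_def e by (simp del: of_nat_Suc)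
  qed
  then have "(\<lambda>m. of_nat (Suc m) * b (Suc m)) sums ((z/2)^2 * tildeI (\<nu> + 1) z)"
    using sums_mult[OF tildeI_sums[of z "\<nu> + 1"]] by simp
  then have shifted: "(\<lambda>m. of_nat m * b m) sums ((z/2)^2 * tildeI (\<nu> + 1) z)"
    using sums_Suc_iff[of "\<lambda>m. of_nat m * b m"] by simp
  have termwise: "(z/2)^(2*m) * rGamma (of_nat m + \<nu>) / fact m - of_nat m * b m = \<nu> * b m" for m
  proof -
    have "rGamma (of_nat m + \<nu>) = (of_nat m + \<nu>) * rGamma (of_nat m + \<nu> + 1)"
      by (simp only: rGamma_plus1)
    then show ?thesis by (simp add: b_def field_simps)
  qed
  have "(\<lambda>m. (z/2)^(2*m) * rGamma (of_nat m + \<nu>) / fact m) sums tildeI (\<nu> - 1) z"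
    using tildeI_sums[of z "\<nu> - 1"] by simp
  from sums_diff[OF this shifted]
  have "(\<lambda>m. \<nu> * b m) sums (tildeI (\<nu> - 1) z - (z/2)^2 * tildeI (\<nu> + 1) z)"
    by (simp only: termwise)
  moreover have "(\<lambda>m. \<nu> * b m) sums (\<nu> * tildeI \<nu> z)"
    unfolding b_def by (rule sums_mult[OF tildeI_sums])
  ultimately show ?thesis by (rule sums_unique2)
qed

lemma tildeI_minus_half: "tildeI (-(1/2)) z = cosh z / of_real (sqrt pi)"
proof -
  have "(z/2)^(2*m) * rGamma (of_nat m + -(1/2) + 1) / fact m = z^(2*m) / fact (2*m) / of_real (sqrt pi)" for m
  proof -
    have "rGamma (of_nat m + 1/2) / fact m = 4^m / (of_real (sqrt pi) * fact (2*m) :: complex)"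
      using rGamma_half_nat_mult[of "2*m"] by (simp add: rGamma_nat_plus1 power_mult)
    moreover have "(z/2)^(2*m) = z^(2*m) / 4^m" by (simp add: power_divide power_mult)
    ultimately have "(z/2)^(2*m) * (rGamma (of_nat m + 1/2) / fact m) = z^(2*m) / 4^m * (4^m / (of_real (sqrt pi) * fact (2*m)))"
      by (simp only:)
    then show ?thesis by (simp add: ac_simps)
  qed
  then have "(\<lambda>m. z^(2*m) / fact (2*m) / of_real (sqrt pi)) sums tildeI (-(1/2)) z"
    using tildeI_sums[of z "-(1/2)"] by simp
  moreover have "(\<lambda>m. z^(2*m) / fact (2*m) / of_real (sqrt pi)) sums (cosh z / of_real (sqrt pi))"
    using sums_divide[OF cosh_converges[of z], of "of_real (sqrt pi)"]
    by (subst (asm) sums_even_reindex[symmetric]) (auto simp: scaleR_conv_of_real field_simps)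
  ultimately show ?thesis by (rule sums_unique2)
qed

lemma tildeI_half: "z * tildeI (1/2) z = 2 * sinh z / of_real (sqrt pi)"
proof -
  have "z * ((z/2)^(2*m) * rGamma (of_nat m + 1/2 + 1) / fact m) = 2 * (z^(2*m+1) / fact (2*m+1)) / of_real (sqrt pi)" for m
  proof -
    have "of_nat (2*m+1) / 2 + 1/2 = of_nat m + (1::complex)"
      and "of_nat (2*m+1) / 2 + 1 = of_nat m + 1/2 + (1::complex)"
      by (simp_all add: field_simps)
    then have "rGamma (of_nat m + 1/2 + 1) / fact m = 2 * 4^m / (of_real (sqrt pi) * fact (2*m+1) :: complex)"
      using rGamma_half_nat_mult[of "2*m+1"] by (simp add: rGamma_nat_plus1 power_mult)
    moreover have "(z/2)^(2*m) = z^(2*m) / 4^m" by (simp add: power_divide power_mult)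
    ultimately have "z * ((z/2)^(2*m) * (rGamma (of_nat m + 1/2 + 1) / fact m))
        = z * (z^(2*m) / 4^m * (2 * 4^m / (of_real (sqrt pi) * fact (2*m+1))))"
      by (simp only:)
    then show ?thesis by (simp add: ac_simps)
  qed
  then have "(\<lambda>m. 2 * (z^(2*m+1) / fact (2*m+1)) / of_real (sqrt pi)) sums (z * tildeI (1/2) z)"
    using sums_mult[OF tildeI_sums[of z "1/2"], of z] by simp
  moreover have "(\<lambda>m. 2 * (z^(2*m+1) / fact (2*m+1)) / of_real (sqrt pi)) sums (2 * sinh z / of_real (sqrt pi))"
    using sums_divide[OF sums_mult[OF sinh_converges[of z], of 2], of "of_real (sqrt pi)"]
    by (subst (asm) sums_odd_reindex[symmetric]) (auto simp: scaleR_conv_of_real field_simps)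
  ultimately show ?thesis by (rule sums_unique2)
qed

definition tildeI_fps :: "complex \<Rightarrow> complex fps" where
  "tildeI_fps \<nu> = Abs_fps (\<lambda>n. if even n then rGamma (of_nat (n div 2) + \<nu> + 1) / (4^(n div 2) * fact (n div 2)) else 0)"

lemma has_fps_expansion_tildeI: "tildeI \<nu> has_fps_expansion tildeI_fps \<nu>"
proof (rule has_fps_expansionI)
  have "tildeI_fps \<nu> $ (2*m) * u^(2*m) = (u/2)^(2*m) * rGamma (of_nat m + \<nu> + 1) / fact m" for u m
    by (simp add: tildeI_fps_def power_divide power_mult)
  then have "(\<lambda>n. tildeI_fps \<nu> $ n * u^n) sums tildeI \<nu> u" for u
    using tildeI_sums[of u \<nu>] by (subst sums_even_reindex[symmetric]) (simp_all add: tildeI_fps_def)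
  then show "\<forall>\<^sub>F u in nhds 0. (\<lambda>n. tildeI_fps \<nu> $ n * u^n) sums tildeI \<nu> u" by simp
qed

lemma tildeI_fps_nth_recurrence:
  "of_nat (k + 2) * (of_nat k + 2*\<nu> + 2) * tildeI_fps \<nu> $ (k + 2) = tildeI_fps \<nu> $ k"
proof (cases "even k")
  case True
  then obtain m where k: "k = 2*m" by (rule evenE)
  define c where "c = of_nat m + \<nu> + 1"
  define d :: complex where "d = 4 * (of_nat m + 1)"
  have "d \<noteq> 0" unfolding d_def by (rule no_zero_divisors) simp_all
  have "tildeI_fps \<nu> $ (k + 2) = rGamma (c + 1) / (d * (4^m * fact m))"
    by (simp add: tildeI_fps_def k c_def d_def add_ac mult_ac)
  with \<open>d \<noteq> 0\<close> have "d * tildeI_fps \<nu> $ (k + 2) = rGamma (c + 1) / (4^m * fact m)"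
    by simp
  moreover have "of_nat (k + 2) * (of_nat k + 2*\<nu> + 2) = c * d"
    by (simp add: k c_def d_def algebra_simps)
  moreover have "tildeI_fps \<nu> $ k = c * rGamma (c + 1) / (4^m * fact m)"
    unfolding rGamma_plus1 by (simp add: k tildeI_fps_def c_def)
  ultimately show ?thesis by (metis mult.assoc times_divide_eq_right)
qed (simp add: tildeI_fps_def)

lemma tildeI_fps_ode:
  "fps_X * fps_deriv (fps_deriv (tildeI_fps \<nu>)) + fps_const (2*\<nu> + 1) * fps_deriv (tildeI_fps \<nu>) = fps_X * tildeI_fps \<nu>"
proof (rule fps_ext)
  fix n
  show "(fps_X * fps_deriv (fps_deriv (tildeI_fps \<nu>)) + fps_const (2*\<nu> + 1) * fps_deriv (tildeI_fps \<nu>)) $ n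
      = (fps_X * tildeI_fps \<nu>) $ n"
  proof (cases n)
    case (Suc k)
    have "of_nat (k + 1) * of_nat (k + 2) * tildeI_fps \<nu> $ (k + 2) + (2*\<nu> + 1) * (of_nat (k + 2) * tildeI_fps \<nu> $ (k + 2))
        = of_nat (k + 2) * (of_nat k + 2*\<nu> + 2) * tildeI_fps \<nu> $ (k + 2)"
      by (simp add: algebra_simps)
    then show ?thesis
      using Suc tildeI_fps_nth_recurrence[of k \<nu>] by (simp add: numeral_2_eq_2 ac_simps)
  qed (simp add: tildeI_fps_def)
qed

definition exp_tildeI_fps :: "complex \<Rightarrow> complex fps" where
  "exp_tildeI_fps \<nu> = fps_exp (-1) * tildeI_fps \<nu>"

lemma exp_tildeI_fps_ode:
  "fps_X * fps_deriv (fps_deriv (exp_tildeI_fps \<nu>)) + (2 * fps_X + fps_const (2*\<nu> + 1)) * fps_deriv (exp_tildeI_fps \<nu>)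
     + fps_const (2*\<nu> + 1) * exp_tildeI_fps \<nu> = 0"
proof -
  define E where "E = fps_exp (-1::complex)"
  define F where "F = tildeI_fps \<nu>"
  define c where "c = fps_const (2*\<nu> + 1)"
  have "fps_deriv E = - E" unfolding E_def by (simp add: fps_eq_iff)
  then have "fps_X * fps_deriv (fps_deriv (E * F)) + (2 * fps_X + c) * fps_deriv (E * F) + c * (E * F)
      = E * (fps_X * fps_deriv (fps_deriv F) + c * fps_deriv F - fps_X * F)"
    by (simp add: algebra_simps)
  also have "\<dots> = 0"
    using tildeI_fps_ode[of \<nu>] unfolding F_def c_def by simp
  finally show ?thesis unfolding exp_tildeI_fps_def E_def F_def c_def .
qed

lemma exp_tildeI_fps_nth_recurrence:
  "(of_nat k + 1) * (of_nat k + 2*\<nu> + 1) * exp_tildeI_fps \<nu> $ Suc k + (2 * of_nat k + 2*\<nu> + 1) * exp_tildeI_fps \<nu> $ k = 0"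
proof -
  define D where "D = exp_tildeI_fps \<nu>"
  have "(fps_X * fps_deriv (fps_deriv D)) $ k = of_nat k * (of_nat k + 1) * D $ Suc k"
    and "(fps_X * fps_deriv D) $ k = of_nat k * D $ k"
    by (cases k; simp add: algebra_simps)+
  moreover have "(2 * fps_X * fps_deriv D) $ k = 2 * (fps_X * fps_deriv D) $ k"
    by (simp add: mult.assoc numeral_fps_const)
  ultimately show ?thesis
    using arg_cong[OF exp_tildeI_fps_ode[of \<nu>, folded D_def], of "\<lambda>F. F $ k"]
    unfolding D_def[symmetric] by (simp add: algebra_simps)
qed

(* Kummer's relation e^(-z) tildeI_nu(z) = 1F1(nu + 1/2; 2 nu + 1; -2z) / Gamma(nu + 1). *)
lemma exp_tildeI_fps_nth:
  assumes "2*\<nu> + 1 \<notin> \<int>\<^sub>\<le>\<^sub>0"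
  shows "exp_tildeI_fps \<nu> $ k = rGamma (\<nu> + 1) * (-2)^k * pochhammer (\<nu> + 1/2) k / (pochhammer (2*\<nu> + 1) k * fact k)"
proof (induction k)
  case 0
  show ?case by (simp add: exp_tildeI_fps_def tildeI_fps_def)
next
  case (Suc k)
  define a where "a = 2*\<nu> + 1 + of_nat k"
  define h where "h = \<nu> + 1/2 + of_nat k"
  have "a \<noteq> 0"
    using of_nat_plus_notin_nonpos_Ints[OF assms, of k] unfolding a_def by (auto simp: add_ac)
  have "pochhammer (2*\<nu> + 1) k \<noteq> 0"
    using assms pochhammer_eq_0_imp_nonpos_Int by blast
  have "exp_tildeI_fps \<nu> $ Suc k * ((of_nat k + 1) * a) = - (2 * h) * exp_tildeI_fps \<nu> $ k"
    using exp_tildeI_fps_nth_recurrence[of k \<nu>] unfolding a_def h_def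
    by (simp add: algebra_simps eq_neg_iff_add_eq_0)
  moreover have "(of_nat k + 1) * a \<noteq> 0" using \<open>a \<noteq> 0\<close> by simp
  ultimately have "exp_tildeI_fps \<nu> $ Suc k = - (2 * h) * exp_tildeI_fps \<nu> $ k / ((of_nat k + 1) * a)"
    by (rule eq_divide_imp[rotated])
  also have "\<dots> = rGamma (\<nu> + 1) * (-2)^Suc k * (pochhammer (\<nu> + 1/2) k * h)
      / ((pochhammer (2*\<nu> + 1) k * a) * ((of_nat k + 1) * fact k))"
    unfolding Suc.IH by (simp add: ac_simps)
  finally show ?case
    unfolding a_def h_def by (simp add: pochhammer_Suc fact_Suc)
qed

section \<open>Bessel functions of half-integer order\<close>

(* Unlike tildeK, whose definition carries the factor 1 / sin (nu pi), this combination inherits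
   the three-term recurrence of tildeI directly. *)
definition bessel_cross :: "complex \<Rightarrow> complex \<Rightarrow> complex" where
  "bessel_cross \<nu> z = (z/2) powr (-2*\<nu>) * tildeI (-\<nu>) z - tildeI \<nu> z"

lemma tildeK_eq_bessel_cross:
  assumes "z \<noteq> 0"
  shows "tildeK \<nu> z = of_real pi / 2 * bessel_cross \<nu> z / sin (\<nu> * of_real pi)"
proof -
  have "(z/2) powr (-\<nu>) * besselI (-\<nu>) z = (z/2) powr (-2*\<nu>) * tildeI (-\<nu>) z"
    unfolding besselI_def tildeI_def by (simp add: powr_add[symmetric] mult.assoc)
  moreover have "(z/2) powr (-\<nu>) * besselI \<nu> z = tildeI \<nu> z"
    using assms unfolding besselI_def tildeI_def by (simp add: powr_add[symmetric] mult.assoc)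
  ultimately show ?thesis
    unfolding tildeK_def besselK_def bessel_cross_def by (simp add: algebra_simps)
qed

lemma bessel_cross_recurrence:
  assumes "z \<noteq> 0"
  shows "bessel_cross (\<nu> + 1) z = (bessel_cross (\<nu> - 1) z - \<nu> * bessel_cross \<nu> z) / (z/2)^2"
proof -
  define p where "p = (z/2) powr (-2*\<nu>)"
  define q where "q = (z/2)^2"
  have "q \<noteq> 0" using assms by (simp add: q_def)
  have "(z/2) powr of_nat 2 = q"
    using assms by (simp add: q_def powr_nat')
  moreover have "(z/2) powr (-2*(\<nu> - 1)) = (z/2) powr (-2*\<nu> + of_nat 2)"
    and "(z/2) powr (-2*(\<nu> + 1)) = (z/2) powr (-2*\<nu> - of_nat 2)"
    by (rule arg_cong[where f = "\<lambda>a. (z/2) powr a"], simp add: algebra_simps)+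
  ultimately have powers: "(z/2) powr (-2*(\<nu> - 1)) = p * q" "(z/2) powr (-2*(\<nu> + 1)) = p / q"
    unfolding p_def by (simp_all only: powr_add powr_diff)
  have I_plus: "tildeI (\<nu> + 1) z = (tildeI (\<nu> - 1) z - \<nu> * tildeI \<nu> z) / q"
    using tildeI_recurrence[of \<nu> z] \<open>q \<noteq> 0\<close> by (simp add: q_def field_simps)
  have I_minus: "tildeI (-(\<nu> + 1)) z = q * tildeI (-(\<nu> - 1)) z - \<nu> * tildeI (-\<nu>) z"
  proof -
    have "-(\<nu> + 1) = -\<nu> - 1" "-(\<nu> - 1) = -\<nu> + 1" by simp_all
    then show ?thesis using tildeI_recurrence[of "-\<nu>" z] by (simp only:) (simp add: q_def algebra_simps)
  qed
  show ?thesis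
    using \<open>q \<noteq> 0\<close> unfolding bessel_cross_def powers I_plus I_minus p_def[symmetric] q_def[symmetric]
    by (simp add: field_simps)
qed

lemma bessel_cross_half:
  assumes "z \<noteq> 0"
  shows "bessel_cross (1/2) z = 2 * exp (-z) / (of_real (sqrt pi) * z)"
proof -
  have "(z/2) powr (-2 * (1/2)) = 2 / z"
    using assms by (simp add: powr_minus_divide)
  moreover have "tildeI (1/2) z = 2 * sinh z / (of_real (sqrt pi) * z)"
    using tildeI_half[of z] assms by (simp add: field_simps)
  ultimately have "bessel_cross (1/2) z = 2 / z * (cosh z / of_real (sqrt pi)) - 2 * sinh z / (of_real (sqrt pi) * z)"
    unfolding bessel_cross_def tildeI_minus_half by (simp only:)
  then show ?thesis
    using assms by (simp add: field_simps flip: cosh_minus_sinh)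
qed

lemma bessel_cross_minus_half:
  assumes "z \<noteq> 0"
  shows "bessel_cross (-(1/2)) z = - exp (-z) / of_real (sqrt pi)"
proof -
  have "(z/2) powr (-2 * -(1/2)) = z / 2"
    using assms by simp
  moreover have "tildeI (1/2) z = 2 * sinh z / (of_real (sqrt pi) * z)"
    using tildeI_half[of z] assms by (simp add: field_simps)
  ultimately have "bessel_cross (-(1/2)) z = z / 2 * (2 * sinh z / (of_real (sqrt pi) * z)) - cosh z / of_real (sqrt pi)"
    unfolding bessel_cross_def tildeI_minus_half minus_minus by (simp only:)
  then show ?thesis
    using assms by (simp add: field_simps flip: cosh_minus_sinh)
qed

(* Coefficient (l+i)! / (i! (l-i)!) of the reverse Bessel polynomial
   y_l(w) = sum_i (l+i)! / (i! (l-i)!) (w/2)^i, written with a binomial coefficient so that it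
   vanishes for i > l. *)
definition rbessel_coeff :: "nat \<Rightarrow> nat \<Rightarrow> complex" where
  "rbessel_coeff l i = of_nat ((l + i) choose (2*i)) * (fact (2*i) / fact i)"

definition rbessel_poly :: "nat \<Rightarrow> complex \<Rightarrow> complex" where
  "rbessel_poly l w = (\<Sum>i\<le>l. rbessel_coeff l i * (w/2)^i)"

lemma rbessel_coeff_eq_fact: "i \<le> l \<Longrightarrow> rbessel_coeff l i = fact (l + i) / (fact i * fact (l - i))"
  using binomial_fact[of "2*i" "l+i", where 'a = complex]
  by (simp add: rbessel_coeff_def field_simps)

lemma rbessel_coeff_eq_0: "l < i \<Longrightarrow> rbessel_coeff l i = 0"
  by (simp add: rbessel_coeff_def binomial_eq_0)

lemma rbessel_coeff_0 [simp]: "rbessel_coeff l 0 = 1"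
  by (simp add: rbessel_coeff_def)

lemma rbessel_coeff_recurrence:
  "rbessel_coeff (l + 2) (Suc j) = rbessel_coeff l (Suc j) + 2 * (2 * of_nat l + 3) * rbessel_coeff (l + 1) j"
proof -
  define n where "n = l + j + 1"
  define A B C where "A = n + 2 choose (2*j + 2)" and "B = n choose (2*j + 2)" and "C = n choose (2*j)"
  define F :: complex where "F = fact (2*j) / fact j"
  have "2 * n + 1 - 2 * j = 2 * l + 3" by (simp add: n_def)
  then have "Suc (2*j) * A = Suc (2*j) * B + (2 * l + 3) * C"
    using Suc_times_binomial_add_2[of "2*j" n] unfolding A_def B_def C_def by (simp only:)
  from arg_cong[OF this, of "of_nat :: nat \<Rightarrow> complex"]
  have key: "of_nat (Suc (2*j)) * of_nat A = of_nat (Suc (2*j)) * of_nat B + (2 * of_nat l + 3) * (of_nat C :: complex)"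
    by (simp add: algebra_simps)
  have "(fact (2 * Suc j) :: complex) / fact (Suc j) = 2 * of_nat (Suc (2*j)) * F"
    unfolding F_def by (simp add: fact_Suc field_simps del: of_nat_Suc) (simp add: algebra_simps)
  moreover have "l + 2 + Suc j = n + 2" "l + Suc j = n" "l + 1 + j = n" "2 * Suc j = 2*j + 2"
    by (simp_all add: n_def)
  ultimately have "rbessel_coeff (l + 2) (Suc j) = 2 * F * (of_nat (Suc (2*j)) * of_nat A)"
    and "rbessel_coeff l (Suc j) = 2 * F * (of_nat (Suc (2*j)) * of_nat B)"
    and "rbessel_coeff (l + 1) j = F * of_nat C"
    unfolding rbessel_coeff_def A_def B_def C_def F_def by (simp_all only: ac_simps)
  then show ?thesis unfolding key by (simp add: algebra_simps)
qed

lemma rbessel_poly_recurrence: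
  "rbessel_poly (l + 2) w = rbessel_poly l w + (2 * of_nat l + 3) * w * rbessel_poly (l + 1) w"
proof -
  have "rbessel_poly (l + 2) w = (\<Sum>i\<le>Suc (l + 1). rbessel_coeff (l + 2) i * (w/2)^i)"
    unfolding rbessel_poly_def by simp
  also have "\<dots> = 1 + (\<Sum>i\<le>l + 1. rbessel_coeff (l + 2) (Suc i) * (w/2)^Suc i)"
    by (simp only: sum.atMost_Suc_shift rbessel_coeff_0) simp
  also have "\<dots> = (1 + (\<Sum>i\<le>l + 1. rbessel_coeff l (Suc i) * (w/2)^Suc i))
      + (2 * of_nat l + 3) * w * (\<Sum>i\<le>l + 1. rbessel_coeff (l + 1) i * (w/2)^i)"
  proof -
    have "rbessel_coeff (l + 2) (Suc i) * (w/2)^Suc i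
        = rbessel_coeff l (Suc i) * (w/2)^Suc i + (2 * of_nat l + 3) * w * (rbessel_coeff (l + 1) i * (w/2)^i)" for i
      unfolding rbessel_coeff_recurrence by (simp add: algebra_simps)
    then show ?thesis by (simp only: sum.distrib sum_distrib_left add.assoc)
  qed
  also have "1 + (\<Sum>i\<le>l + 1. rbessel_coeff l (Suc i) * (w/2)^Suc i) = rbessel_poly l w"
  proof -
    have "rbessel_poly l w = (\<Sum>i\<le>Suc (l + 1). rbessel_coeff l i * (w/2)^i)"
      unfolding rbessel_poly_def by (rule sum.mono_neutral_left) (auto simp: rbessel_coeff_eq_0)
    then show ?thesis by (simp only: sum.atMost_Suc_shift rbessel_coeff_0) simp
  qed
  finally show ?thesis unfolding rbessel_poly_def by simp
qed

lemma bessel_cross_half_integer: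
  assumes "z \<noteq> 0"
  shows "bessel_cross (of_nat l + 1/2) z
    = (-1)^l * 2^(l+1) * exp (-z) / (of_real (sqrt pi) * z^(l+1)) * rbessel_poly l (1/z)"
proof -
  define F where "F l = (-1)^l * 2^(l+1) * exp (-z) / (of_real (sqrt pi) * z^(l+1)) * rbessel_poly l (1/z)" for l
  have recurrence: "bessel_cross (of_nat (Suc n) + 1/2 + 1) z
      = (bessel_cross (of_nat (Suc n) + 1/2 - 1) z - (of_nat (Suc n) + 1/2) * bessel_cross (of_nat (Suc n) + 1/2) z) / (z/2)^2" for n
    by (rule bessel_cross_recurrence[OF assms])
  have base0: "bessel_cross (of_nat 0 + 1/2) z = F 0"
    using bessel_cross_half[OF assms] by (simp add: F_def rbessel_poly_def)
  have base1: "bessel_cross (of_nat 1 + 1/2) z = F 1"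
  proof -
    have "rbessel_poly 1 w = 1 + w" for w
      by (simp add: rbessel_poly_def rbessel_coeff_def numeral_2_eq_2)
    then have "(bessel_cross (-(1/2)) z - 1/2 * bessel_cross (1/2) z) / (z/2)^2 = F 1"
      using assms unfolding F_def bessel_cross_half[OF assms] bessel_cross_minus_half[OF assms]
      by (simp add: field_simps power2_eq_square power3_eq_cube)
    then show ?thesis
      using bessel_cross_recurrence[OF assms, of "1/2"] by (simp add: add.commute)
  qed
  have "bessel_cross (of_nat n + 1/2) z = F n \<and> bessel_cross (of_nat (Suc n) + 1/2) z = F (Suc n)" for n
  proof (induction n)
    case 0
    show ?case using base0 base1 by simp
  next
    case (Suc n)
    have "of_nat (Suc n) + 1/2 + 1 = of_nat (Suc (Suc n)) + (1/2 :: complex)"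
      and "of_nat (Suc n) + 1/2 - 1 = of_nat n + (1/2 :: complex)" by simp_all
    then have "bessel_cross (of_nat (Suc (Suc n)) + 1/2) z = (F n - (of_nat n + 3/2) * F (Suc n)) / (z/2)^2"
      using recurrence[of n] Suc.IH by (simp add: add_ac)
    also have "\<dots> = F (Suc (Suc n))"
    proof -
      have rec: "rbessel_poly (Suc (Suc n)) (1/z)
          = rbessel_poly n (1/z) + (2 * of_nat n + 3) * (1/z) * rbessel_poly (Suc n) (1/z)"
        using rbessel_poly_recurrence[of n "1/z"] by simp
      show ?thesis using assms unfolding F_def rec by (simp add: field_simps power2_eq_square)
    qed
    finally show ?case using Suc.IH by simp
  qed
  then show ?thesis unfolding F_def by blast
qed

lemma tildeK_half_integer:
  assumes "z \<noteq> 0"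
  shows "tildeK (of_nat l + 1/2) z = 2^l * of_real (sqrt pi) * exp (-z) / z^(l+1) * rbessel_poly l (1/z)"
proof -
  have "of_real pi = (of_real (sqrt pi) * of_real (sqrt pi) :: complex)"
    by (simp flip: of_real_mult)
  then show ?thesis
    using assms unfolding tildeK_eq_bessel_cross[OF assms] bessel_cross_half_integer[OF assms] sin_half_integer_pi
    by (simp add: field_simps)
qed

lemma rbessel_coeff_binomial_reindex:
  "(\<Sum>i\<le>l. rbessel_coeff l i * X^(l - i) * ((-1)^k * of_nat (i choose k)))
     = (\<Sum>i\<in>{i. i + k \<le> l}. (-1)^k * fact (2*l - i) / (fact k * fact (l - i - k) * fact i) * X^i)"
proof -
  have "(\<Sum>i\<le>l. rbessel_coeff l i * X^(l - i) * ((-1)^k * of_nat (i choose k)))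
      = (\<Sum>i\<in>{k..l}. rbessel_coeff l i * X^(l - i) * ((-1)^k * of_nat (i choose k)))"
    by (rule sum.mono_neutral_right) (auto simp: binomial_eq_0)
  also have "\<dots> = (\<Sum>i\<in>{i. i + k \<le> l}. (-1)^k * fact (2*l - i) / (fact k * fact (l - i - k) * fact i) * X^i)"
  proof (rule sum.reindex_bij_witness[of _ "\<lambda>i. l - i" "\<lambda>i. l - i"])
    fix i assume "i \<in> {k..l}"
    then have "k \<le> i" "i \<le> l" by simp_all
    moreover have "2*l - (l - i) = l + i" "l - (l - i) - k = i - k" using \<open>i \<le> l\<close> by simp_all
    ultimately show "(-1)^k * fact (2*l - (l - i)) / (fact k * fact (l - (l - i) - k) * fact (l - i)) * X^(l - i)
        = rbessel_coeff l i * X^(l - i) * ((-1)^k * of_nat (i choose k))"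
      using binomial_fact[of k i, where 'a = complex]
      by (simp add: rbessel_coeff_eq_fact field_simps)
  qed auto
  finally show ?thesis .
qed

section \<open>A generating function for Laguerre polynomials\<close>

definition fps_ratio :: "complex \<Rightarrow> complex fps" where
  "fps_ratio x = fps_const (x/2) * fps_X * fps_neg_binomial 1"

lemma has_fps_expansion_ratio: "(\<lambda>t. t * x / (2 * (1 - t))) has_fps_expansion fps_ratio x"
proof -
  have "(\<lambda>t. x/2 * (t * inverse (1 - t))) has_fps_expansion fps_ratio x"
    unfolding fps_ratio_def fps_neg_binomial_1 mult.assoc
    by (intro has_fps_expansion_cmult_left has_fps_expansion_mult has_fps_expansion_fps_X
        has_fps_expansion_inverse has_fps_expansion_diff has_fps_expansion_1) simp
  moreover have "x/2 * (t * inverse (1 - t)) = t * x / (2 * (1 - t))" for t :: complex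
    by (cases "t = 1") (simp_all add: field_simps)
  ultimately show ?thesis by (simp only:)
qed

lemma fps_ratio_nth_0 [simp]: "fps_ratio x $ 0 = 0"
  by (simp add: fps_ratio_def mult.assoc)

lemma fps_ratio_power: "fps_ratio x ^ k = fps_const ((x/2)^k) * (fps_X^k * fps_neg_binomial (of_nat k))"
proof (induction k)
  case 0
  show ?case by (simp add: fps_neg_binomial_0)
next
  case (Suc k)
  have "fps_ratio x ^ Suc k
      = fps_const ((x/2)^k * (x/2)) * ((fps_X^k * fps_X) * (fps_neg_binomial (of_nat k) * fps_neg_binomial 1))"
    unfolding power_Suc2 Suc.IH unfolding fps_ratio_def fps_const_mult[symmetric] by (simp only: ac_simps)
  then show ?case by (simp add: fps_neg_binomial_add power_Suc2 add.commute)
qed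

lemma fps_neg_binomial_mult_compose_ratio_nth:
  "(fps_neg_binomial a * (D oo fps_ratio x)) $ n = (\<Sum>k\<le>n. D $ k * (x/2)^k * fps_neg_binomial (a + of_nat k) $ (n - k))"
proof -
  define T where "T = (\<Sum>k\<le>n. fps_const (D $ k) * fps_ratio x ^ k)"
  have "(D oo fps_ratio x) $ m = T $ m" if "m \<le> n" for m
  proof -
    have "(D oo fps_ratio x) $ m = (\<Sum>k\<le>m. D $ k * (fps_ratio x ^ k) $ m)"
      by (simp add: fps_compose_nth atLeast0AtMost)
    also have "\<dots> = (\<Sum>k\<le>n. D $ k * (fps_ratio x ^ k) $ m)"
      using that startsby_zero_power_prefix[OF fps_ratio_nth_0]
      by (intro sum.mono_neutral_left) auto
    finally show ?thesis by (simp add: T_def fps_sum_nth)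
  qed
  then have "(fps_neg_binomial a * (D oo fps_ratio x)) $ n = (fps_neg_binomial a * T) $ n"
    by (simp add: fps_mult_nth)
  also have "fps_neg_binomial a * T = (\<Sum>k\<le>n. fps_const (D $ k * (x/2)^k) * (fps_X^k * fps_neg_binomial (a + of_nat k)))"
    unfolding T_def sum_distrib_left fps_ratio_power
    by (intro sum.cong refl) (simp add: fps_neg_binomial_add algebra_simps flip: fps_const_mult)
  also have "\<dots> $ n = (\<Sum>k\<le>n. D $ k * (x/2)^k * fps_neg_binomial (a + of_nat k) $ (n - k))"
    by (simp add: fps_sum_nth fps_X_power_mult_nth)
  finally show ?thesis .
qed

lemma has_fps_expansion_exp_tildeI_ratio:
  "(\<lambda>t. (1 - t) powr (-a) * (exp (-(t * x / (2 * (1 - t)))) * tildeI \<nu> (t * x / (2 * (1 - t)))))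
     has_fps_expansion fps_neg_binomial a * (exp_tildeI_fps \<nu> oo fps_ratio x)"
proof -
  have "((\<lambda>u. exp (-u)) \<circ> (\<lambda>t. t * x / (2 * (1 - t)))) has_fps_expansion (fps_exp (-1) oo fps_ratio x)"
    and "(tildeI \<nu> \<circ> (\<lambda>t. t * x / (2 * (1 - t)))) has_fps_expansion (tildeI_fps \<nu> oo fps_ratio x)"
    by (intro has_fps_expansion_compose has_fps_expansion_exp_neg1 has_fps_expansion_tildeI
        has_fps_expansion_ratio fps_ratio_nth_0)+
  then have "(\<lambda>t. (1 - t) powr (-a) * (exp (-(t * x / (2 * (1 - t)))) * tildeI \<nu> (t * x / (2 * (1 - t)))))
      has_fps_expansion fps_neg_binomial a * ((fps_exp (-1) oo fps_ratio x) * (tildeI_fps \<nu> oo fps_ratio x))"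
    by (intro has_fps_expansion_mult has_fps_expansion_neg_binomial) (simp_all add: o_def)
  then show ?thesis
    unfolding exp_tildeI_fps_def by (simp add: fps_compose_mult_distrib)
qed

definition laguerre_gf :: "complex \<Rightarrow> complex \<Rightarrow> complex fps" where
  "laguerre_gf \<mu> x = fps_neg_binomial ((\<mu>+1)/2) * (exp_tildeI_fps (\<mu>/2) oo fps_ratio x)"

lemma laguerre_gf_nth:
  assumes "\<mu> + 1 \<notin> \<int>\<^sub>\<le>\<^sub>0"
  shows "laguerre_gf \<mu> x $ n
     = rGamma (\<mu>/2 + 1) * pochhammer ((\<mu>+1)/2) n / pochhammer (\<mu>+1) n * laguerre n \<mu> x"
proof -
  define a where "a = (\<mu>+1)/2"
  have D: "exp_tildeI_fps (\<mu>/2) $ k = rGamma (\<mu>/2 + 1) * (-2)^k * pochhammer a k / (pochhammer (\<mu>+1) k * fact k)" for k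
    using exp_tildeI_fps_nth[of "\<mu>/2" k] assms by (simp add: a_def add_divide_distrib add_ac)
  have "exp_tildeI_fps (\<mu>/2) $ k * (x/2)^k * fps_neg_binomial (a + of_nat k) $ (n - k)
      = rGamma (\<mu>/2 + 1) * pochhammer a n / pochhammer (\<mu>+1) n * ((-1)^k / fact k * ((of_nat n + \<mu>) gchoose (n - k)) * x^k)"
    if "k \<le> n" for k
  proof -
    have split_a: "pochhammer a n = pochhammer a k * pochhammer (a + of_nat k) (n - k)"
      and split_mu: "pochhammer (\<mu>+1) n = pochhammer (\<mu>+1) k * pochhammer (\<mu> + 1 + of_nat k) (n - k)"
      using pochhammer_product'[of _ k "n - k"] that by simp_all
    have gchoose: "(of_nat n + \<mu>) gchoose (n - k) = pochhammer (\<mu> + 1 + of_nat k) (n - k) / fact (n - k)"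
      unfolding gbinomial_pochhammer' using that by (simp add: of_nat_diff algebra_simps)
    have "pochhammer (\<mu>+1) n \<noteq> 0"
      using assms pochhammer_eq_0_imp_nonpos_Int by blast
    moreover have minus_two_power: "(-2 :: complex)^k = (-1)^k * 2^k"
      by (simp flip: power_mult_distrib)
    ultimately show ?thesis
      unfolding D fps_neg_binomial_nth split_a split_mu gchoose minus_two_power
      by (simp add: field_simps power_divide)
  qed
  then show ?thesis
    unfolding laguerre_gf_def fps_neg_binomial_mult_compose_ratio_nth laguerre_def sum_distrib_left a_def[symmetric]
    by (intro sum.cong) auto
qed

lemma Gamma_ratio_eq_pochhammer_ratio:
  fixes \<mu> :: complex
  assumes "\<mu> + 1 \<notin> \<int>\<^sub>\<le>\<^sub>0"
  shows "of_real (sqrt pi) * rGamma (\<mu>/2 + 1) * pochhammer ((\<mu>+1)/2) m / (2 powr \<mu> * pochhammer (\<mu>+1) m)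
       = Gamma (of_nat m + (\<mu>+1)/2) / Gamma (of_nat m + \<mu> + 1)"
proof -
  define a where "a = (\<mu>+1)/2"
  have "\<mu>/2 + 1 = a + 1/2" "2 * a = \<mu> + 1" "1 - 2*a = -\<mu>"
    by (simp_all add: a_def field_simps)
  have "a \<notin> \<int>\<^sub>\<le>\<^sub>0"
  proof
    assume "a \<in> \<int>\<^sub>\<le>\<^sub>0"
    then have "2 * a \<in> \<int>\<^sub>\<le>\<^sub>0" by (intro Nats_mult_nonpos_Ints) simp_all
    with assms \<open>2 * a = \<mu> + 1\<close> show False by simp
  qed
  have "a + 1/2 \<notin> \<int>\<^sub>\<le>\<^sub>0"
  proof
    assume "a + 1/2 \<in> \<int>\<^sub>\<le>\<^sub>0"
    then have "2 * (a + 1/2) - 1 \<in> \<int>\<^sub>\<le>\<^sub>0" by (intro nonpos_Ints_diff_Nats Nats_mult_nonpos_Ints) simp_all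
    with assms \<open>2 * a = \<mu> + 1\<close> show False by (simp add: algebra_simps)
  qed
  have "Ln 2 = of_real (ln 2)" using Ln_of_real[of 2] by simp
  then have "exp ((1 - 2*a) * of_real (ln 2)) = 1 / 2 powr \<mu>"
    unfolding \<open>1 - 2*a = -\<mu>\<close> by (simp add: powr_def exp_minus inverse_eq_divide)
  then have duplication: "Gamma a * Gamma (a + 1/2) = of_real (sqrt pi) * Gamma (\<mu> + 1) / 2 powr \<mu>"
    using Gamma_legendre_duplication[OF \<open>a \<notin> \<int>\<^sub>\<le>\<^sub>0\<close> \<open>a + 1/2 \<notin> \<int>\<^sub>\<le>\<^sub>0\<close>] \<open>2 * a = \<mu> + 1\<close> by simp
  have "of_nat m + \<mu> + 1 \<notin> \<int>\<^sub>\<le>\<^sub>0"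
    using of_nat_plus_notin_nonpos_Ints[OF assms] by (simp add: add.assoc)
  then have nonzero: "Gamma (of_nat m + \<mu> + 1) \<noteq> 0" "Gamma a \<noteq> 0" "Gamma (a + 1/2) \<noteq> 0" "Gamma (\<mu> + 1) \<noteq> 0"
    using assms \<open>a \<notin> \<int>\<^sub>\<le>\<^sub>0\<close> \<open>a + 1/2 \<notin> \<int>\<^sub>\<le>\<^sub>0\<close> by (simp_all add: Gamma_eq_zero_iff)
  have poch: "pochhammer a m = Gamma (of_nat m + a) / Gamma a"
    "pochhammer (\<mu>+1) m = Gamma (of_nat m + \<mu> + 1) / Gamma (\<mu>+1)"
    using pochhammer_Gamma[OF \<open>a \<notin> \<int>\<^sub>\<le>\<^sub>0\<close>] pochhammer_Gamma[OF assms] by (simp_all add: add_ac)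
  have "of_real (sqrt pi) * rGamma (a + 1/2) * pochhammer a m / (2 powr \<mu> * pochhammer (\<mu>+1) m)
      = Gamma (of_nat m + a) / Gamma (of_nat m + \<mu> + 1) * (of_real (sqrt pi) * Gamma (\<mu> + 1) / 2 powr \<mu> / (Gamma a * Gamma (a + 1/2)))"
    unfolding rGamma_inverse_Gamma poch using nonzero by (simp add: field_simps)
  also have "of_real (sqrt pi) * Gamma (\<mu> + 1) / 2 powr \<mu> / (Gamma a * Gamma (a + 1/2)) = 1"
    using nonzero unfolding duplication[symmetric] by simp
  finally show ?thesis unfolding a_def[symmetric] \<open>\<mu>/2 + 1 = a + 1/2\<close> by simp
qed

lemma laguerre_gf_nth_Gamma:
  fixes \<mu> :: complex
  assumes "\<mu> + 1 \<notin> \<int>\<^sub>\<le>\<^sub>0"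
  shows "of_real (sqrt pi) / 2 powr \<mu> * laguerre_gf \<mu> x $ m
       = Gamma (of_nat m + (\<mu>+1)/2) / Gamma (of_nat m + \<mu> + 1) * laguerre m \<mu> x"
  unfolding laguerre_gf_nth[OF assms] Gamma_ratio_eq_pochhammer_ratio[OF assms, symmetric]
  by (simp add: ac_simps)

section \<open>Taylor coefficients of G\<close>

lemma tildeK_half_integer_scaled:
  assumes "x \<noteq> 0" and "u \<noteq> 0"
  shows "(x/2)^(2*l+1) / u^(l+1) * tildeK (of_nat l + 1/2) (x / (2*u))
       = of_real (sqrt pi) * exp (-(x / (2*u))) * (\<Sum>i\<le>l. rbessel_coeff l i * x^(l - i) * u^i)"
proof -
  define z where "z = x / (2*u)"
  have "z \<noteq> 0" using assms by (simp add: z_def)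
  have "(x/2)^(2*l+1) / u^(l+1) * (2^l / z^(l+1) * (rbessel_coeff l i * (1/z/2)^i))
      = rbessel_coeff l i * x^(l - i) * u^i" if "i \<le> l" for i
  proof -
    obtain j where l: "l = i + j" using \<open>i \<le> l\<close> by (auto simp: le_iff_add)
    have "2 * (i + j) + 1 = i + i + j + j + 1" by simp
    then show ?thesis
      using assms unfolding l z_def by (simp only:) (simp add: field_simps power_add power_mult_distrib power_divide)
  qed
  then have poly: "(x/2)^(2*l+1) / u^(l+1) * (2^l / z^(l+1) * rbessel_poly l (1/z))
      = (\<Sum>i\<le>l. rbessel_coeff l i * x^(l - i) * u^i)"
    unfolding rbessel_poly_def sum_distrib_left by (intro sum.cong refl) simp
  have "(x/2)^(2*l+1) / u^(l+1) * tildeK (of_nat l + 1/2) z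
      = of_real (sqrt pi) * exp (-z) * ((x/2)^(2*l+1) / u^(l+1) * (2^l / z^(l+1) * rbessel_poly l (1/z)))"
    unfolding tildeK_half_integer[OF \<open>z \<noteq> 0\<close>] by (simp add: ac_simps)
  also have "\<dots> = of_real (sqrt pi) * exp (-z) * (\<Sum>i\<le>l. rbessel_coeff l i * x^(l - i) * u^i)"
    unfolding poly ..
  finally show ?thesis unfolding z_def .
qed

lemma G_eq_product:
  assumes "x \<noteq> 0" and "t \<noteq> 1"
  shows "G \<mu> l t x = of_real (sqrt pi) * (\<Sum>i\<le>l. rbessel_coeff l i * x^(l - i) * (1 - t)^i)
     * ((1 - t) powr (-((\<mu>+1)/2)) * (exp (-(t * x / (2 * (1 - t)))) * tildeI (\<mu>/2) (t * x / (2 * (1 - t)))))"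
proof -
  define u where "u = 1 - t"
  define y where "y = t * x / (2 * u)"
  have "u \<noteq> 0" using assms by (simp add: u_def)
  have "u powr (of_nat l + (\<mu> + 3) / 2) = u powr ((\<mu>+1)/2 + of_nat (l+1))"
    by (rule arg_cong[where f = "\<lambda>a. u powr a"]) (simp add: field_simps)
  also have "\<dots> = u powr ((\<mu>+1)/2) * u^(l+1)"
    by (simp only: powr_add powr_nat'[OF disjI1[OF \<open>u \<noteq> 0\<close>]])
  finally have powr_u: "1 / u powr (of_nat l + (\<mu> + 3) / 2) = u powr (-((\<mu>+1)/2)) / u^(l+1)"
    by (simp add: powr_minus inverse_eq_divide)
  have "x/2 - x / (2*u) = -y" using \<open>u \<noteq> 0\<close> by (simp add: y_def u_def field_simps)
  then have exp_y: "exp (x/2) * exp (-(x / (2*u))) = exp (-y)" by (simp flip: exp_add)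
  have "G \<mu> l t x = (x/2)^(2*l+1) / u^(l+1) * tildeK (of_nat l + 1/2) (x / (2*u))
      * (u powr (-((\<mu>+1)/2)) * (exp (x/2) * tildeI (\<mu>/2) y))"
    unfolding G_def u_def[symmetric] y_def[symmetric] powr_u by (simp add: ac_simps)
  also have "\<dots> = of_real (sqrt pi) * (\<Sum>i\<le>l. rbessel_coeff l i * x^(l - i) * u^i)
      * (u powr (-((\<mu>+1)/2)) * (exp (x/2) * exp (-(x / (2*u))) * tildeI (\<mu>/2) y))"
    unfolding tildeK_half_integer_scaled[OF assms(1) \<open>u \<noteq> 0\<close>] by (simp add: ac_simps)
  also have "\<dots> = of_real (sqrt pi) * (\<Sum>i\<le>l. rbessel_coeff l i * x^(l - i) * u^i)
      * (u powr (-((\<mu>+1)/2)) * (exp (-y) * tildeI (\<mu>/2) y))"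
    unfolding exp_y ..
  finally show ?thesis unfolding u_def y_def .
qed

lemma has_fps_expansion_G:
  assumes "x \<noteq> 0"
  shows "(\<lambda>t. G \<mu> l t x) has_fps_expansion
     fps_const (of_real (sqrt pi)) * (\<Sum>i\<le>l. fps_const (rbessel_coeff l i * x^(l - i)) * (1 - fps_X)^i) * laguerre_gf \<mu> x"
proof -
  have "(\<lambda>t. of_real (sqrt pi) * (\<Sum>i\<le>l. rbessel_coeff l i * x^(l - i) * (1 - t)^i)
      * ((1 - t) powr (-((\<mu>+1)/2)) * (exp (-(t * x / (2 * (1 - t)))) * tildeI (\<mu>/2) (t * x / (2 * (1 - t))))))
      has_fps_expansion
     fps_const (of_real (sqrt pi)) * (\<Sum>i\<le>l. fps_const (rbessel_coeff l i * x^(l - i)) * (1 - fps_X)^i) * laguerre_gf \<mu> x"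
    unfolding laguerre_gf_def
    by (intro has_fps_expansion_mult has_fps_expansion_sum has_fps_expansion_cmult_left has_fps_expansion_power
        has_fps_expansion_diff has_fps_expansion_1 has_fps_expansion_fps_X has_fps_expansion_exp_tildeI_ratio)
  moreover have "eventually (\<lambda>t. t \<noteq> 1) (nhds (0::complex))"
    by (rule t1_space_nhds) simp
  then have "eventually (\<lambda>t. of_real (sqrt pi) * (\<Sum>i\<le>l. rbessel_coeff l i * x^(l - i) * (1 - t)^i)
      * ((1 - t) powr (-((\<mu>+1)/2)) * (exp (-(t * x / (2 * (1 - t)))) * tildeI (\<mu>/2) (t * x / (2 * (1 - t)))))
      = G \<mu> l t x) (nhds 0)"
    by eventually_elim (use assms in \<open>simp add: G_eq_product\<close>)
  ultimately show ?thesis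
    by (subst (asm) has_fps_expansion_cong) auto
qed

lemma M_eq_laguerre_sum:
  fixes \<mu> :: complex and x :: real
  assumes "\<mu> + 1 \<notin> \<int>\<^sub>\<le>\<^sub>0" and "x \<noteq> 0"
  shows "M \<mu> l j x = Gamma (of_nat j + \<mu> + 1) / Gamma (of_nat j + (\<mu> + 1) / 2) *
      (\<Sum>k\<le>j. \<Sum>i\<in>{i. i + k \<le> l}.
         (-1)^k * Gamma (of_nat (j - k) + (\<mu> + 1) / 2) * fact (2*l - i)
         / (fact k * Gamma (of_nat (j - k) + \<mu> + 1) * fact (l - i - k) * fact i)
         * laguerre (j - k) \<mu> (complex_of_real x) * complex_of_real x ^ i)"
proof -
  define X where "X = complex_of_real x"
  define C where "C = Gamma (of_nat j + \<mu> + 1) / Gamma (of_nat j + (\<mu> + 1) / 2)"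
  define R where "R m = Gamma (of_nat m + (\<mu>+1)/2) / Gamma (of_nat m + \<mu> + 1) * laguerre m \<mu> X" for m
  have "X \<noteq> 0" using assms(2) by (simp add: X_def)
  have "(2::complex) powr \<mu> \<noteq> 0" by (simp add: powr_def)
  have "M \<mu> l j x = C / 2 powr \<mu> * (deriv ^^ j) (\<lambda>t. G \<mu> l t X) 0 / fact j"
    unfolding M_def X_def[symmetric] C_def by (simp add: field_simps)
  also have "\<dots> = C / 2 powr \<mu> * of_real (sqrt pi)
      * ((\<Sum>i\<le>l. fps_const (rbessel_coeff l i * X^(l - i)) * (1 - fps_X)^i) * laguerre_gf \<mu> X) $ j"
    using fps_nth_fps_expansion[OF has_fps_expansion_G[OF \<open>X \<noteq> 0\<close>, of \<mu> l], of j]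
    by (simp add: mult.assoc)
  also have "\<dots> = C * (\<Sum>k\<le>j. (of_real (sqrt pi) / 2 powr \<mu> * laguerre_gf \<mu> X $ (j - k))
      * (\<Sum>i\<le>l. rbessel_coeff l i * X^(l - i) * ((-1)^k * of_nat (i choose k))))"
    unfolding sum_one_minus_X_power_mult_nth sum_distrib_left by (intro sum.cong refl) (simp add: ac_simps)
  also have "\<dots> = C * (\<Sum>k\<le>j. \<Sum>i\<in>{i. i + k \<le> l}.
      (-1)^k * fact (2*l - i) / (fact k * fact (l - i - k) * fact i) * X^i * R (j - k))"
    unfolding laguerre_gf_nth_Gamma[OF assms(1)] rbessel_coeff_binomial_reindex sum_distrib_left R_def
    by (intro sum.cong refl) (simp add: ac_simps)
  finally show ?thesis
    unfolding C_def R_def X_def by (simp add: ac_simps)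
qed

section \<open>Expansion in powers of x\<close>

lemma laguerre_eq_Gamma_sum:
  fixes \<mu> :: complex
  assumes "\<mu> + 1 \<notin> \<int>\<^sub>\<le>\<^sub>0"
  shows "laguerre q \<mu> x
       = Gamma (of_nat q + \<mu> + 1) * (\<Sum>n\<le>q. (-1)^n / (Gamma (of_nat n + \<mu> + 1) * fact n * fact (q - n)) * x^n)"
proof -
  have "(of_nat q + \<mu>) gchoose (q - n) = Gamma (of_nat q + \<mu> + 1) / (Gamma (of_nat n + \<mu> + 1) * fact (q - n))"
    if "n \<le> q" for n
  proof -
    have shift: "of_nat q + \<mu> - of_nat (q - n) + 1 = of_nat n + \<mu> + 1"
      and shift': "of_nat n + \<mu> + 1 + of_nat (q - n) = of_nat q + \<mu> + 1"
      using that by (simp_all add: of_nat_diff)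
    have "of_nat n + \<mu> + 1 \<notin> \<int>\<^sub>\<le>\<^sub>0"
      using of_nat_plus_notin_nonpos_Ints[OF assms] by (simp add: add.assoc)
    then show ?thesis
      unfolding gbinomial_pochhammer' shift pochhammer_Gamma[OF \<open>of_nat n + \<mu> + 1 \<notin> \<int>\<^sub>\<le>\<^sub>0\<close>] shift'
      by simp
  qed
  then show ?thesis
    unfolding laguerre_def sum_distrib_left by (intro sum.cong refl) (simp add: ac_simps)
qed

lemma sum_Sidx_reindex:
  "(\<Sum>k\<le>j. \<Sum>i\<in>{i. i + k \<le> l}. \<Sum>n\<le>j - k. f k n (i + n))
     = (\<Sum>K\<le>j + l. \<Sum>(m, n)\<in>Sidx l j K. f m n K)"
proof -
  have "(\<Sum>k\<le>j. \<Sum>i\<in>{i. i + k \<le> l}. \<Sum>n\<le>j - k. f k n (i + n))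
      = (\<Sum>k\<le>j. \<Sum>(i, n) \<in> {i. i + k \<le> l} \<times> {..j - k}. f k n (i + n))"
    by (intro sum.cong refl sum.Sigma) (auto intro: finite_subset[of _ "{..l}"])
  also have "\<dots> = (\<Sum>(k, i, n) \<in> (SIGMA k:{..j}. {i. i + k \<le> l} \<times> {..j - k}). f k n (i + n))"
    by (subst sum.Sigma) (auto intro!: finite_SigmaI intro: finite_subset[of _ "{..l}"])
  also have "\<dots> = (\<Sum>(K, m, n) \<in> (SIGMA K:{..j + l}. Sidx l j K). f m n K)"
    by (rule sum.reindex_bij_witness[of _ "\<lambda>(K, m, n). (m, K - n, n)" "\<lambda>(k, i, n). (i + n, k, n)"])
       (auto simp: Sidx_def)
  also have "\<dots> = (\<Sum>K\<le>j + l. \<Sum>(m, n)\<in>Sidx l j K. f m n K)"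
    by (rule sum.Sigma[symmetric]) (auto simp: Sidx_def intro: finite_subset[of _ "{..j} \<times> {..j}"])
  finally show ?thesis .
qed

lemma laguerre_sum_eq_beta_sum:
  fixes \<mu> x :: complex
  assumes "\<mu> + 1 \<notin> \<int>\<^sub>\<le>\<^sub>0"
  shows "Gamma (of_nat j + \<mu> + 1) / Gamma (of_nat j + (\<mu> + 1) / 2) *
      (\<Sum>k\<le>j. \<Sum>i\<in>{i. i + k \<le> l}.
         (-1)^k * Gamma (of_nat (j - k) + (\<mu> + 1) / 2) * fact (2*l - i)
         / (fact k * Gamma (of_nat (j - k) + \<mu> + 1) * fact (l - i - k) * fact i)
         * laguerre (j - k) \<mu> x * x ^ i)
      = (\<Sum>k\<le>j + l. beta \<mu> l j k * x ^ k)"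
proof -
  define e where "e m n K = (-1)^(m+n) * Gamma (of_nat (j - m) + (\<mu> + 1) / 2) / Gamma (of_nat n + \<mu> + 1)
      * fact (2*l + n - K) / (fact m * fact n * fact (K - n) * fact (j - m - n) * fact (l + n - K - m))" for m n K
  have expand: "(-1)^k * Gamma (of_nat (j - k) + (\<mu> + 1) / 2) * fact (2*l - i)
         / (fact k * Gamma (of_nat (j - k) + \<mu> + 1) * fact (l - i - k) * fact i) * laguerre (j - k) \<mu> x * x ^ i
      = (\<Sum>n\<le>j - k. e k n (i + n) * x^(i + n))" for k i
  proof -
    have "Gamma (of_nat (j - k) + \<mu> + 1) \<noteq> 0"
      using of_nat_plus_notin_nonpos_Ints[OF assms, of "j - k"] by (simp add: Gamma_eq_zero_iff add.assoc)
    moreover have "2*l + n - (i + n) = 2*l - i" "i + n - n = i" "l + n - (i + n) - k = l - i - k" for n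
      by simp_all
    ultimately show ?thesis
      unfolding laguerre_eq_Gamma_sum[OF assms] sum_distrib_left sum_distrib_right
      by (intro sum.cong refl) (simp add: e_def field_simps power_add)
  qed
  have laguerre_sum: "(\<Sum>k\<le>j. \<Sum>i\<in>{i. i + k \<le> l}.
         (-1)^k * Gamma (of_nat (j - k) + (\<mu> + 1) / 2) * fact (2*l - i)
         / (fact k * Gamma (of_nat (j - k) + \<mu> + 1) * fact (l - i - k) * fact i) * laguerre (j - k) \<mu> x * x ^ i)
      = (\<Sum>K\<le>j + l. \<Sum>(m, n)\<in>Sidx l j K. e m n K * x^K)"
    unfolding expand by (rule sum_Sidx_reindex)
  have "(\<Sum>K\<le>j + l. beta \<mu> l j K * x^K)
      = Gamma (of_nat j + \<mu> + 1) / Gamma (of_nat j + (\<mu> + 1) / 2) * (\<Sum>K\<le>j + l. \<Sum>(m, n)\<in>Sidx l j K. e m n K * x^K)"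
    unfolding beta_def e_def sum_distrib_left sum_distrib_right
    by (intro sum.cong refl) (auto simp: mult.assoc split: prod.splits)
  then show ?thesis unfolding laguerre_sum ..
qed

theorem proposition3p1:
  fixes \<mu> :: complex and l j :: nat and x :: real
  assumes "\<forall>n::nat. \<mu> \<noteq> - of_nat (Suc n)"
    and "x > 0"
  shows "M \<mu> l j x =
      Gamma (of_nat j + \<mu> + 1) / Gamma (of_nat j + (\<mu> + 1) / 2) *
      (\<Sum>k\<le>j. \<Sum>i\<in>{i. i + k \<le> l}.
         (-1)^k * Gamma (of_nat (j - k) + (\<mu> + 1) / 2) * fact (2*l - i)
         / (fact k * Gamma (of_nat (j - k) + \<mu> + 1) * fact (l - i - k) * fact i)
         * laguerre (j - k) \<mu> (complex_of_real x) * complex_of_real x ^ i)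
    \<and> Gamma (of_nat j + \<mu> + 1) / Gamma (of_nat j + (\<mu> + 1) / 2) *
      (\<Sum>k\<le>j. \<Sum>i\<in>{i. i + k \<le> l}.
         (-1)^k * Gamma (of_nat (j - k) + (\<mu> + 1) / 2) * fact (2*l - i)
         / (fact k * Gamma (of_nat (j - k) + \<mu> + 1) * fact (l - i - k) * fact i)
         * laguerre (j - k) \<mu> (complex_of_real x) * complex_of_real x ^ i)
      = (\<Sum>k\<le>j + l. beta \<mu> l j k * complex_of_real x ^ k)"
proof -
  have "\<mu> + 1 \<notin> \<int>\<^sub>\<le>\<^sub>0"
    using assms(1) by (simp add: plus_one_notin_nonpos_Ints_iff)
  moreover have "x \<noteq> 0" using assms(2) by simp
  ultimately show ?thesis
    using M_eq_laguerre_sum laguerre_sum_eq_beta_sum by blast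
qed

end
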